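(* Let $D=0.5$ and let $p_0,p_1,\dots,p_{N_p}$ be the PWM basis functions on $[0,1]$ defined in the context. Then for every $k=1,\dots,N_p$ and every $\tau\in(0,0.5)$, $$-p_k(\tau)=p_k(\tau+0.5).$$
   Context: The PWM basis functions with duty cycle $D\in(0,1)$ are functions of the relative time $\tau\in[0,1]$, defined recursively as follows. Set $p_0(\tau)=1$ on $[0,1]$, and $$p_1(\tau)=\begin{cases}\sqrt3\,\dfrac{2\tau-D}{D}, & 0\le\tau\le D,\\[2mm] \sqrt3\,\dfrac{1+D-2\tau}{1-D}, & D\le\tau\le 1.\end{cases}$$ For $k\ge2$, define $p_k^\star(\tau)=\int_D^\tau p_{k-1}(\tau')\,d\tau'$, then $$\overline p_k(\tau)=p_k^\star(\tau)-\sum_{l=0}^{k-1}p_l(\tau)\int_0^1 p_l(s)\,p_k^\star(s)\,ds,\qquad p_k(\tau)=\frac{\overline p_k(\tau)}{\left(\int_0^1\overline p_k(s)^2\,ds\right)^{1/2}}$$ (Gram–Schmidt orthonormalization in $L^2([0,1])$). For $D=0.5$, $p_1(\tau)=\sqrt3(4\tau-1)$ on $[0,0.5)$ and $p_1(\tau)=\sqrt3(3-4\tau)$ on $[0.5,1]$. *)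

theory Defs
  imports "HOL-Analysis.Analysis"
begin

definition pwm_p1 :: "real \<Rightarrow> real \<Rightarrow> real" where
  "pwm_p1 D t = (if t \<le> D then sqrt 3 * (2 * t - D) / D
                 else sqrt 3 * (1 + D - 2 * t) / (1 - D))"

definition oint :: "real \<Rightarrow> real \<Rightarrow> (real \<Rightarrow> real) \<Rightarrow> real" where
  "oint a b f = (if a \<le> b then integral {a..b} f else - integral {b..a} f)"

text \<open>One Gram-Schmidt step: from the list [p_0,...,p_{k-1}] produce p_k.\<close>
definition pwm_step :: "real \<Rightarrow> (real \<Rightarrow> real) list \<Rightarrow> (real \<Rightarrow> real)" where
  "pwm_step D ps =
     (let pstar = (\<lambda>t. oint D t (last ps));
          pbar = (\<lambda>t. pstar t - (\<Sum>l\<leftarrow>ps. l t * integral {0..1} (\<lambda>s. l s * pstar s)));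
          nrm = sqrt (integral {0..1} (\<lambda>s. (pbar s)^2))
      in (\<lambda>t. pbar t / nrm))"

fun pwm_list :: "real \<Rightarrow> nat \<Rightarrow> (real \<Rightarrow> real) list" where
  "pwm_list D 0 = [\<lambda>t. 1]"
| "pwm_list D (Suc 0) = [\<lambda>t. 1, pwm_p1 D]"
| "pwm_list D (Suc (Suc k)) =
     (let ps = pwm_list D (Suc k) in ps @ [pwm_step D ps])"

definition pwm :: "real \<Rightarrow> nat \<Rightarrow> real \<Rightarrow> real" where
  "pwm D k = pwm_list D k ! k"

end

theory Submission
  imports Defs
begin

text \<open>For duty cycle \<open>D = 1/2\<close> the two halves of \<open>[0,1]\<close> are exchanged by the shift
  \<open>t \<mapsto> t + 1/2\<close>, and \<open>p\<^sub>1\<close> changes sign under it. This half-wave antisymmetry survives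
  every Gram--Schmidt step: the antiderivative \<open>p\<^sup>\<star>\<^sub>k\<close> of an antisymmetric function has
  constant pair sums \<open>p\<^sup>\<star>\<^sub>k t + p\<^sup>\<star>\<^sub>k (t + 1/2)\<close>, so subtracting its projection onto
  \<open>p\<^sub>0 = 1\<close> (its mean) makes it antisymmetric, and the projections onto the antisymmetric
  \<open>p\<^sub>1, \<dots>, p\<^sub>k\<^sub>-\<^sub>1\<close> are antisymmetric as well.\<close>

definition half_antiperiodic :: "(real \<Rightarrow> real) \<Rightarrow> bool" where
  "half_antiperiodic f \<longleftrightarrow>
     continuous_on {0..1} f \<and> (\<forall>t\<in>{0..1/2}. f (t + 1/2) = - f t)"

lemma half_antiperiodicD:
  assumes "half_antiperiodic f"
  shows "continuous_on {0..1} f" and "t \<in> {0..1/2} \<Longrightarrow> f (t + 1/2) = - f t"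
  using assms by (auto simp: half_antiperiodic_def)

lemma half_antiperiodic_diff:
  "half_antiperiodic f \<Longrightarrow> half_antiperiodic g \<Longrightarrow> half_antiperiodic (\<lambda>t. f t - g t)"
  unfolding half_antiperiodic_def by (simp add: continuous_on_diff)

lemma half_antiperiodic_divide:
  "half_antiperiodic f \<Longrightarrow> half_antiperiodic (\<lambda>t. f t / c)"
  unfolding half_antiperiodic_def divide_inverse by (simp add: continuous_on_mult_right)

lemma half_antiperiodic_sum_list:
  "\<forall>q\<in>set qs. half_antiperiodic q \<Longrightarrow>
     half_antiperiodic (\<lambda>t. \<Sum>q\<leftarrow>qs. q t * c q)"
proof (induction qs)
  case Nil
  show ?case by (simp add: half_antiperiodic_def)
next
  case (Cons q qs)
  then have "half_antiperiodic q" and "half_antiperiodic (\<lambda>t. \<Sum>q\<leftarrow>qs. q t * c q)"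
    by simp_all
  then show ?case
    unfolding half_antiperiodic_def
    by (simp add: continuous_on_add continuous_on_mult_right)
qed

lemma half_antiperiodic_pwm_p1: "half_antiperiodic (pwm_p1 (1/2))"
  unfolding half_antiperiodic_def
proof
  have "continuous_on {0..1} (\<lambda>t::real. sqrt 3 * (1 - \<bar>4 * t - 2\<bar>))"
    by (auto intro!: continuous_intros)
  then show "continuous_on {0..1} (pwm_p1 (1/2))"
    by (rule continuous_on_cong[THEN iffD1, rotated -1]) (auto simp: pwm_p1_def)
  show "\<forall>t\<in>{0..1/2}. pwm_p1 (1/2) (t + 1/2) = - pwm_p1 (1/2) t"
    by (auto simp: pwm_p1_def field_simps)
qed

lemma continuous_on_unit_interval_integrable:
  "continuous_on {0..1} (g :: real \<Rightarrow> real) \<Longrightarrow> 0 \<le> a \<Longrightarrow> b \<le> 1 \<Longrightarrow> g integrable_on {a..b}"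
  by (rule integrable_continuous_real, erule continuous_on_subset) auto

lemma integral_shift_half:
  "integral {1/2..t + 1/2} g = integral {0..t} (\<lambda>s. g (s + 1/2 :: real))"
  using integral_shift_real_ivl[where f = g and a = "1/2" and b = "t + 1/2" and c = "1/2"] by simp

lemma integral_unit_interval_pair_sum:
  assumes g: "continuous_on {0..1} (g :: real \<Rightarrow> real)"
    and pair: "\<And>t. t \<in> {0..1/2} \<Longrightarrow> g t + g (t + 1/2) = c"
  shows "integral {0..1} g = c / 2"
proof -
  have shifted: "(\<lambda>s. g (s + 1/2)) integrable_on {0..1/2}"
    by (rule integrable_continuous_real, rule continuous_on_compose2[OF g])
       (auto intro!: continuous_intros)
  have "integral {0..1} g = integral {0..1/2} g + integral {1/2..1} g"
    using Henstock_Kurzweil_Integration.integral_combine[where f = g and a = 0 and c = "1/2" and b = 1]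
      continuous_on_unit_interval_integrable[OF g]
    by simp
  also have "\<dots> = integral {0..1/2} g + integral {0..1/2} (\<lambda>s. g (s + 1/2))"
    using integral_shift_half[where t = "1/2" and g = g] by simp
  also have "\<dots> = integral {0..1/2} (\<lambda>s. g s + g (s + 1/2))"
    using integral_add[OF continuous_on_unit_interval_integrable[OF g] shifted] by simp
  also have "\<dots> = integral {0..1/2::real} (\<lambda>s. c)"
    by (rule integral_cong) (use pair in auto)
  finally show ?thesis by simp
qed

lemma half_antiperiodic_sub_half_pair_sum:
  assumes "continuous_on {0..1} g"
    and "\<And>t. t \<in> {0..1/2} \<Longrightarrow> g t + g (t + 1/2) = c"
  shows "half_antiperiodic (\<lambda>t. g t - c / 2)"
  using assms unfolding half_antiperiodic_def
  by (auto intro!: continuous_intros simp: algebra_simps eq_diff_eq)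

lemma oint_half_eq:
  assumes f: "continuous_on {0..1} f" and t: "t \<in> {0..1}"
  shows "oint (1/2) t f = integral {0..t} f - integral {0..1/2} f"
proof (cases "1/2 \<le> t")
  case True
  then show ?thesis
    using Henstock_Kurzweil_Integration.integral_combine[where f = f and a = 0 and c = "1/2" and b = t]
      continuous_on_unit_interval_integrable[OF f, of 0 t] t
    by (simp add: oint_def)
next
  case False
  then show ?thesis
    using Henstock_Kurzweil_Integration.integral_combine[where f = f and a = 0 and c = t and b = "1/2"]
      continuous_on_unit_interval_integrable[OF f, of 0 "1/2"] t
    by (simp add: oint_def)
qed

lemma integral_upto_shift_half:
  assumes f: "half_antiperiodic f" and t: "t \<in> {0..1/2}"
  shows "integral {0..t + 1/2} f = integral {0..1/2} f - integral {0..t} f"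
proof -
  note fc = half_antiperiodicD(1)[OF f]
  have "integral {0..t + 1/2} f = integral {0..1/2} f + integral {1/2..t + 1/2} f"
    using Henstock_Kurzweil_Integration.integral_combine[where f = f and a = 0 and c = "1/2" and b = "t + 1/2"]
      continuous_on_unit_interval_integrable[OF fc, of 0 "t + 1/2"] t
    by simp
  also have "integral {1/2..t + 1/2} f = integral {0..t} (\<lambda>s. - f s)"
    unfolding integral_shift_half
    by (rule integral_cong) (use half_antiperiodicD(2)[OF f] t in auto)
  finally show ?thesis by simp
qed

lemma oint_half_pair_sum:
  assumes "half_antiperiodic f" and "t \<in> {0..1/2}"
  shows "oint (1/2) t f + oint (1/2) (t + 1/2) f = - integral {0..1/2} f"
  using assms integral_upto_shift_half[OF assms]
    oint_half_eq[OF half_antiperiodicD(1)[OF assms(1)], of t]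
    oint_half_eq[OF half_antiperiodicD(1)[OF assms(1)], of "t + 1/2"]
  by simp

lemma continuous_on_oint_half:
  assumes f: "continuous_on {0..1} f"
  shows "continuous_on {0..1} (\<lambda>t. oint (1/2) t f)"
proof -
  have "continuous_on {0..1} (\<lambda>t. integral {0..t} f - integral {0..1/2} f)"
    by (intro continuous_intros indefinite_integral_continuous_1
        continuous_on_unit_interval_integrable[OF f]) auto
  then show ?thesis
    by (rule continuous_on_cong[THEN iffD1, rotated -1]) (auto simp: oint_half_eq[OF f])
qed

lemma half_antiperiodic_gram_schmidt_residual:
  assumes qs: "\<forall>q\<in>set qs. half_antiperiodic q"
    and g: "continuous_on {0..1} g"
    and pair: "\<And>t. t \<in> {0..1/2} \<Longrightarrow> g t + g (t + 1/2) = c"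
  shows "half_antiperiodic
    (\<lambda>t. (g t - (\<Sum>q\<leftarrow>(\<lambda>t. 1) # qs. q t * integral {0..1} (\<lambda>s. q s * g s))) / n)"
proof -
  have mean: "integral {0..1} g = c / 2"
    by (rule integral_unit_interval_pair_sum[OF g pair])
  have "half_antiperiodic
      (\<lambda>t. (g t - c / 2 - (\<Sum>q\<leftarrow>qs. q t * integral {0..1} (\<lambda>s. q s * g s))) / n)"
    by (intro half_antiperiodic_divide half_antiperiodic_diff half_antiperiodic_sum_list
        half_antiperiodic_sub_half_pair_sum[OF g pair] qs)
  then show ?thesis by (simp add: mean diff_diff_eq)
qed

lemma half_antiperiodic_pwm_step:
  assumes qs: "\<forall>q\<in>set qs. half_antiperiodic q" and "qs \<noteq> []"
  shows "half_antiperiodic (pwm_step (1/2) ((\<lambda>t. 1) # qs))"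
proof -
  have last: "half_antiperiodic (last qs)" using assms by simp
  have "half_antiperiodic (\<lambda>t. (oint (1/2) t (last qs)
      - (\<Sum>q\<leftarrow>(\<lambda>t. 1) # qs. q t * integral {0..1} (\<lambda>s. q s * oint (1/2) s (last qs)))) / n)" for n
    by (rule half_antiperiodic_gram_schmidt_residual[OF qs
          continuous_on_oint_half[OF half_antiperiodicD(1)[OF last]] oint_half_pair_sum[OF last]])
  then show ?thesis using \<open>qs \<noteq> []\<close> by (simp add: pwm_step_def Let_def)
qed

lemma pwm_list_half_antiperiodic:
  "\<exists>qs. pwm_list (1/2) (Suc k) = (\<lambda>t. 1) # qs \<and> length qs = Suc k
     \<and> (\<forall>q\<in>set qs. half_antiperiodic q)"
proof (induction k)
  case 0
  show ?case
    using half_antiperiodic_pwm_p1 by (intro exI[of _ "[pwm_p1 (1/2)]"]) simp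
next
  case (Suc k)
  then obtain qs where qs: "pwm_list (1/2) (Suc k) = (\<lambda>t. 1) # qs" "length qs = Suc k"
    "\<forall>q\<in>set qs. half_antiperiodic q"
    by blast
  have "half_antiperiodic (pwm_step (1/2) ((\<lambda>t. 1) # qs))"
    using qs by (intro half_antiperiodic_pwm_step) auto
  then show ?case
    using qs by (intro exI[of _ "qs @ [pwm_step (1/2) ((\<lambda>t. 1) # qs)]"]) (simp add: Let_def)
qed

theorem theorem1:
  fixes k :: nat and \<tau> :: real
  assumes "1 \<le> k" and "0 < \<tau>" and "\<tau> < 1/2"
  shows "- pwm (1/2) k \<tau> = pwm (1/2) k (\<tau> + 1/2)"
proof -
  obtain m where k: "k = Suc m" using assms(1) by (cases k) auto
  obtain qs where qs: "pwm_list (1/2) (Suc m) = (\<lambda>t. 1) # qs" "length qs = Suc m"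
    "\<forall>q\<in>set qs. half_antiperiodic q"
    using pwm_list_half_antiperiodic by blast
  have "pwm (1/2) k = qs ! m" using qs k by (simp add: pwm_def)
  moreover have "half_antiperiodic (qs ! m)" using qs by auto
  ultimately show ?thesis using assms by (auto simp: half_antiperiodic_def)
qed

end
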